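(* For every finite subset $B\subseteq A$, the set $\{b\in\mathrm{Cl}(B)\mid \mathrm{pr}_3(b)\neq0\}$ is finite.
   Context: Let $\langle P,\preccurlyeq,\preccurlyeq^\ast\rangle$ be a doubly ordered set: $\preccurlyeq$ a partial order on $P$, $\preccurlyeq^\ast$ a preorder on $P$, and $p\preccurlyeq q\Rightarrow p\preccurlyeq^\ast q$. Write $p\prec q$ for ($p\preccurlyeq q$ and $p\neq q$). For a quadruple $\langle x_0,x_1,x_2,x_3\rangle$ and $i<4$, $\mathrm{pr}_i(\langle x_0,x_1,x_2,x_3\rangle)=x_i$. Define recursively $A_0=\{\langle0,p,\varnothing,k\rangle\mid p\in P,k\in\omega\}$ and $A_{n+1}=A_n\cup\{\langle n+1,q,a,0\rangle\mid q\in P,a\in A_n,\mathrm{pr}_1(a)\prec q\}\cup\{\langle n+1,q,a,k\rangle\mid q\in P,a\in A_n,\mathrm{pr}_1(a)\not\preccurlyeq q,\mathrm{pr}_1(a)\preccurlyeq^\ast q,k\in\omega\}$; let $A=\bigcup_{n}A_n$. A subset $C\subseteq A$ is closed if (i) for all $n\in\omega$, all $a\in C\cap A_n$ and all $q\in P$ with $\mathrm{pr}_1(a)\prec q$, we have $\langle n+1,q,a,0\rangle\in C$, and (ii) for all $b\in C\setminus A_0$, $\mathrm{pr}_2(b)\in C$. For $B\subseteq A$, $\mathrm{Cl}(B)$ is the least closed subset of $A$ including $B$. *)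

theory Defs
  imports Main
begin

text \<open>Quadruples <n, p, a, k>; the third component is either the empty set
  (represented by None) or an earlier quadruple (Some a).\<close>
datatype 'p quad = Quad nat 'p "'p quad option" nat

primrec pr0 :: "'p quad \<Rightarrow> nat" where "pr0 (Quad n p a k) = n"
primrec pr1 :: "'p quad \<Rightarrow> 'p" where "pr1 (Quad n p a k) = p"
primrec pr2 :: "'p quad \<Rightarrow> 'p quad option" where "pr2 (Quad n p a k) = a"
primrec pr3 :: "'p quad \<Rightarrow> nat" where "pr3 (Quad n p a k) = k"

definition doubly_ordered :: "('p \<Rightarrow> 'p \<Rightarrow> bool) \<Rightarrow> ('p \<Rightarrow> 'p \<Rightarrow> bool) \<Rightarrow> bool" where
  "doubly_ordered le les \<longleftrightarrow>
     reflp le \<and> transp le \<and> antisymp le \<and> reflp les \<and> transp les \<and>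
     (\<forall>p q. le p q \<longrightarrow> les p q)"

primrec Alev :: "('p \<Rightarrow> 'p \<Rightarrow> bool) \<Rightarrow> ('p \<Rightarrow> 'p \<Rightarrow> bool) \<Rightarrow> nat \<Rightarrow> 'p quad set" where
  "Alev le les 0 = {Quad 0 p None k | p k. True}"
| "Alev le les (Suc n) = Alev le les n
     \<union> {Quad (Suc n) q (Some a) 0 | q a. a \<in> Alev le les n \<and> le (pr1 a) q \<and> pr1 a \<noteq> q}
     \<union> {Quad (Suc n) q (Some a) k | q a k. a \<in> Alev le les n \<and> \<not> le (pr1 a) q \<and> les (pr1 a) q}"

definition Aset :: "('p \<Rightarrow> 'p \<Rightarrow> bool) \<Rightarrow> ('p \<Rightarrow> 'p \<Rightarrow> bool) \<Rightarrow> 'p quad set" where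
  "Aset le les = (\<Union>n. Alev le les n)"

definition closed_set :: "('p \<Rightarrow> 'p \<Rightarrow> bool) \<Rightarrow> ('p \<Rightarrow> 'p \<Rightarrow> bool) \<Rightarrow> 'p quad set \<Rightarrow> bool" where
  "closed_set le les C \<longleftrightarrow> C \<subseteq> Aset le les \<and>
     (\<forall>n a q. a \<in> C \<inter> Alev le les n \<and> le (pr1 a) q \<and> pr1 a \<noteq> q
        \<longrightarrow> Quad (Suc n) q (Some a) 0 \<in> C) \<and>
     (\<forall>b \<in> C - Alev le les 0. \<forall>a. pr2 b = Some a \<longrightarrow> a \<in> C)"

definition Cl :: "('p \<Rightarrow> 'p \<Rightarrow> bool) \<Rightarrow> ('p \<Rightarrow> 'p \<Rightarrow> bool) \<Rightarrow> 'p quad set \<Rightarrow> 'p quad set" where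
  "Cl le les B = \<Inter>{C. closed_set le les C \<and> B \<subseteq> C}"

end

theory Submission
  imports Defs
begin

text \<open>Rule (i) of closedness only creates quadruples with last component 0, and rule (ii) only
  descends to the second component. Hence the closure of B is contained in the set generated
  from the (finitely many) iterated second components of elements of B by rule (i) alone, and
  its elements with nonzero last component are among those finitely many ancestors.\<close>

definition parent_rel :: "('p quad \<times> 'p quad) set" where
  "parent_rel = {(a, b). pr2 b = Some a}"

definition ancestors :: "'p quad set \<Rightarrow> 'p quad set" where
  "ancestors B = {x. \<exists>b\<in>B. (x, b) \<in> parent_rel\<^sup>*}"

lemma finite_ancestors_single: "finite {x. (x, b) \<in> parent_rel\<^sup>*}"
proof (induction b)
  case (Quad n p a k)
  have "{x. (x, Quad n p a k) \<in> parent_rel\<^sup>*}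
          \<subseteq> insert (Quad n p a k) (\<Union>y\<in>set_option a. {x. (x, y) \<in> parent_rel\<^sup>*})"
  proof
    fix x
    assume "x \<in> {x. (x, Quad n p a k) \<in> parent_rel\<^sup>*}"
    then have "(x, Quad n p a k) \<in> parent_rel\<^sup>*"
      by simp
    then show "x \<in> insert (Quad n p a k) (\<Union>y\<in>set_option a. {x. (x, y) \<in> parent_rel\<^sup>*})"
      by (cases rule: rtranclE) (auto simp: parent_rel_def)
  qed
  moreover have "finite (insert (Quad n p a k) (\<Union>y\<in>set_option a. {x. (x, y) \<in> parent_rel\<^sup>*}))"
    using Quad by auto
  ultimately show ?case
    by (rule finite_subset)
qed

lemma finite_ancestors:
  assumes "finite B"
  shows "finite (ancestors B)"
proof -
  have "ancestors B = (\<Union>b\<in>B. {x. (x, b) \<in> parent_rel\<^sup>*})"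
    unfolding ancestors_def by auto
  then show ?thesis
    using assms finite_ancestors_single by auto
qed

lemma subset_ancestors: "B \<subseteq> ancestors B"
  unfolding ancestors_def by blast

lemma ancestors_parent:
  assumes "x \<in> ancestors B" and "pr2 x = Some a"
  shows "a \<in> ancestors B"
proof -
  obtain b where "b \<in> B" and "(x, b) \<in> parent_rel\<^sup>*"
    using assms(1) unfolding ancestors_def by blast
  moreover have "(a, x) \<in> parent_rel"
    using assms(2) by (simp add: parent_rel_def)
  ultimately show ?thesis
    unfolding ancestors_def by (blast intro: converse_rtrancl_into_rtrancl)
qed

lemma Alev_pr2: "b \<in> Alev le les n \<Longrightarrow> pr2 b = Some a \<Longrightarrow> a \<in> Alev le les n"
proof (induction n arbitrary: b)
  case (Suc n)
  have "b \<in> Alev le les n \<or> (\<exists>a'. pr2 b = Some a' \<and> a' \<in> Alev le les n)"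
    using Suc.prems(1) by auto
  then have "a \<in> Alev le les n"
    using Suc.IH Suc.prems(2) by auto
  then show ?case
    by simp
qed auto

lemma Aset_pr2:
  assumes "b \<in> Aset le les" and "pr2 b = Some a"
  shows "a \<in> Aset le les"
proof -
  obtain n where "b \<in> Alev le les n"
    using assms(1) unfolding Aset_def by blast
  then have "a \<in> Alev le les n"
    using assms(2) by (rule Alev_pr2)
  then show ?thesis
    unfolding Aset_def by blast
qed

lemma ancestors_subset_Aset:
  assumes "B \<subseteq> Aset le les"
  shows "ancestors B \<subseteq> Aset le les"
proof
  fix x
  assume "x \<in> ancestors B"
  then obtain b where "(x, b) \<in> parent_rel\<^sup>*" and "b \<in> B"
    unfolding ancestors_def by blast
  then show "x \<in> Aset le les"
  proof (induction rule: converse_rtrancl_induct)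
    case base
    then show ?case
      using assms by blast
  next
    case (step y z)
    then show ?case
      using Aset_pr2 by (auto simp: parent_rel_def)
  qed
qed

inductive_set successor_hull :: "('p \<Rightarrow> 'p \<Rightarrow> bool) \<Rightarrow> ('p \<Rightarrow> 'p \<Rightarrow> bool) \<Rightarrow> 'p quad set \<Rightarrow> 'p quad set"
  for le les B where
  ancestor: "x \<in> ancestors B \<Longrightarrow> x \<in> successor_hull le les B"
| successor: "a \<in> successor_hull le les B \<Longrightarrow> a \<in> Alev le les n \<Longrightarrow> le (pr1 a) q \<Longrightarrow> pr1 a \<noteq> q
    \<Longrightarrow> Quad (Suc n) q (Some a) 0 \<in> successor_hull le les B"

lemma successor_hull_subset_Aset:
  "B \<subseteq> Aset le les \<Longrightarrow> successor_hull le les B \<subseteq> Aset le les"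
proof
  fix x
  assume "x \<in> successor_hull le les B" and "B \<subseteq> Aset le les"
  then show "x \<in> Aset le les"
  proof (induction rule: successor_hull.induct)
    case (ancestor x)
    then show ?case
      using ancestors_subset_Aset by blast
  next
    case (successor a n q)
    then have "Quad (Suc n) q (Some a) 0 \<in> Alev le les (Suc n)"
      by auto
    then show ?case
      unfolding Aset_def by blast
  qed
qed

lemma successor_hull_pr2:
  "x \<in> successor_hull le les B \<Longrightarrow> pr2 x = Some a \<Longrightarrow> a \<in> successor_hull le les B"
  by (induction rule: successor_hull.induct)
    (auto intro: successor_hull.ancestor ancestors_parent)

lemma closed_successor_hull:
  "B \<subseteq> Aset le les \<Longrightarrow> closed_set le les (successor_hull le les B)"
  unfolding closed_set_def
proof (intro conjI allI impI ballI)
  assume "B \<subseteq> Aset le les"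
  then show "successor_hull le les B \<subseteq> Aset le les"
    by (rule successor_hull_subset_Aset)
next
  fix n a q
  assume "a \<in> successor_hull le les B \<inter> Alev le les n \<and> le (pr1 a) q \<and> pr1 a \<noteq> q"
  then show "Quad (Suc n) q (Some a) 0 \<in> successor_hull le les B"
    by (auto intro: successor_hull.successor)
next
  fix b a
  assume "b \<in> successor_hull le les B - Alev le les 0" and "pr2 b = Some a"
  then show "a \<in> successor_hull le les B"
    using successor_hull_pr2 by blast
qed

lemma subset_successor_hull: "B \<subseteq> successor_hull le les B"
  using subset_ancestors by (blast intro: successor_hull.ancestor)

lemma successor_hull_pr3_nonzero:
  "x \<in> successor_hull le les B \<Longrightarrow> pr3 x \<noteq> 0 \<Longrightarrow> x \<in> ancestors B"
  by (induction rule: successor_hull.induct) auto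

lemma Cl_subset_successor_hull:
  assumes "B \<subseteq> Aset le les"
  shows "Cl le les B \<subseteq> successor_hull le les B"
proof -
  have "successor_hull le les B \<in> {C. closed_set le les C \<and> B \<subseteq> C}"
    using closed_successor_hull[OF assms] subset_successor_hull by blast
  then show ?thesis
    unfolding Cl_def by (rule Inter_lower)
qed

theorem lemma2p2:
  fixes le les :: "'p \<Rightarrow> 'p \<Rightarrow> bool" and B :: "'p quad set"
  assumes "doubly_ordered le les"
    and "finite B" and "B \<subseteq> Aset le les"
  shows "finite {b \<in> Cl le les B. pr3 b \<noteq> 0}"
proof -
  have "{b \<in> Cl le les B. pr3 b \<noteq> 0} \<subseteq> ancestors B"
    using Cl_subset_successor_hull[OF assms(3)] successor_hull_pr3_nonzero by blast
  then show ?thesis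
    using finite_ancestors[OF assms(2)] by (rule finite_subset)
qed

end
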